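(* Let $\mathbb{K}$ be a field of characteristic not $2$ and $p\geq 1$. Let $f:M_{1,p}(\mathbb{K})\to\mathbb{K}$, $g:M_{p,1}(\mathbb{K})\to\mathbb{K}$, $\varphi:M_{1,p}(\mathbb{K})\to M_{1,p}(\mathbb{K})$, $\psi:M_{p,1}(\mathbb{K})\to M_{p,1}(\mathbb{K})$ be linear. For $L\in M_{1,p}(\mathbb{K})$, $C\in M_{p,1}(\mathbb{K})$ set $$A_L=\begin{bmatrix}0&L&0\\ 0_{p\times1}&0_{p\times p}&0_{p\times1}\\ f(L)&\varphi(L)&0\end{bmatrix},\qquad B_C=\begin{bmatrix}0&0_{1\times p}&0\\ \psi(C)&0_{p\times p}&C\\ g(C)&0_{1\times p}&0\end{bmatrix}\in M_{p+2}(\mathbb{K}).$$ Assume either (i) for all $(L,C)$, every linear combination of $A_L$ and $B_C$ has at most one nonzero eigenvalue in $\overline{\mathbb{K}}$; or (ii) $p\neq 2$ and for all $(L,C)$, every linear combination of $A_L$ and $B_C$ has at most two distinct eigenvalues in $\overline{\mathbb{K}}$. Then there exist $\lambda,\mu\in\mathbb{K}$ with $\varphi(L)=\lambda L$ and $\psi(C)=\mu C$ for all $L,C$.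
   Context: $\overline{\mathbb{K}}$ is an algebraic closure of $\mathbb{K}$; $M_{a,b}(\mathbb{K})$ is the space of $a\times b$ matrices. *)

theory Defs
  imports "Jordan_Normal_Form.Char_Poly" "HOL-Algebra.Algebraic_Closure_Type"
begin

definition lin_mat_map :: "nat \<Rightarrow> nat \<Rightarrow> nat \<Rightarrow> nat \<Rightarrow> ('a::field mat \<Rightarrow> 'a mat) \<Rightarrow> bool" where
  "lin_mat_map m n k l h \<longleftrightarrow>
     (\<forall>x\<in>carrier_mat m n. h x \<in> carrier_mat k l) \<and>
     (\<forall>x\<in>carrier_mat m n. \<forall>y\<in>carrier_mat m n. h (x + y) = h x + h y) \<and>
     (\<forall>a. \<forall>x\<in>carrier_mat m n. h (a \<cdot>\<^sub>m x) = a \<cdot>\<^sub>m h x)"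

definition lin_mat_form :: "nat \<Rightarrow> nat \<Rightarrow> ('a::field mat \<Rightarrow> 'a) \<Rightarrow> bool" where
  "lin_mat_form m n h \<longleftrightarrow>
     (\<forall>x\<in>carrier_mat m n. \<forall>y\<in>carrier_mat m n. h (x + y) = h x + h y) \<and>
     (\<forall>a. \<forall>x\<in>carrier_mat m n. h (a \<cdot>\<^sub>m x) = a * h x)"

definition A_mat :: "nat \<Rightarrow> ('a::field mat \<Rightarrow> 'a) \<Rightarrow> ('a mat \<Rightarrow> 'a mat) \<Rightarrow> 'a mat \<Rightarrow> 'a mat" where
  "A_mat p f \<phi> L = mat (p+2) (p+2) (\<lambda>(i,j).
      if i = 0 \<and> 1 \<le> j \<and> j \<le> p then L $$ (0, j - 1)
      else if i = p+1 \<and> j = 0 then f L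
      else if i = p+1 \<and> 1 \<le> j \<and> j \<le> p then (\<phi> L) $$ (0, j - 1)
      else 0)"

definition B_mat :: "nat \<Rightarrow> ('a::field mat \<Rightarrow> 'a) \<Rightarrow> ('a mat \<Rightarrow> 'a mat) \<Rightarrow> 'a mat \<Rightarrow> 'a mat" where
  "B_mat p g \<psi> C = mat (p+2) (p+2) (\<lambda>(i,j).
      if 1 \<le> i \<and> i \<le> p \<and> j = 0 then (\<psi> C) $$ (i - 1, 0)
      else if 1 \<le> i \<and> i \<le> p \<and> j = p+1 then C $$ (i - 1, 0)
      else if i = p+1 \<and> j = 0 then g C
      else 0)"

definition ac_eigenvalue :: "'a::field mat \<Rightarrow> 'a alg_closure \<Rightarrow> bool" where
  "ac_eigenvalue M k \<longleftrightarrow> eigenvalue (map_mat to_ac M) k"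

end

theory Submission
  imports Defs
begin

text \<open>
  Regard \<open>\<phi>\<close> and \<open>\<psi>\<close> as linear maps on \<open>K\<^sup>p\<close>. A linear map \<open>F\<close> with \<open>F u \<bullet> v = 0\<close> whenever
  \<open>u \<bullet> v = 0\<close> is a scalar multiple of the identity. If \<open>\<phi>\<close> is not, there are \<open>u \<bullet> v = 0\<close> with
  \<open>d = \<phi> u \<bullet> v \<noteq> 0\<close>; for \<open>L = u\<close>, \<open>C = v / d\<close> the matrix \<open>A\<^sub>L + B\<^sub>C\<close> has the eigenvectors
  \<open>(0, \<plusminus>v / d, 1)\<close> for the eigenvalues \<open>\<plusminus>1\<close> and, when \<open>p \<ge> 3\<close>, a kernel vector \<open>(0, y, 0)\<close> with
  \<open>y\<close> orthogonal to \<open>u\<close> and \<open>\<phi> u\<close>. This contradicts (i) and (ii) alike, as \<open>1 \<noteq> -1\<close>.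
  Once \<open>\<phi> = \<lambda>\<close>, the same argument with \<open>L = v / d\<close>, \<open>C = u\<close> and the eigenvectors
  \<open>(s, \<psi> u + \<beta> u, s \<beta>)\<close>, \<open>s = \<plusminus>1\<close>, shows that \<open>\<psi>\<close> is scalar as well.
\<close>

lemma one_neq_minus_one:
  assumes "CHAR('a::ring_1) \<noteq> 2"
  shows "(1::'a) \<noteq> -1"
proof
  assume "(1::'a) = -1"
  then have "of_nat 2 = (0::'a)"
    by (simp add: eq_neg_iff_add_eq_0)
  then have "CHAR('a) dvd 2"
    by (simp only: of_nat_eq_0_iff_char_dvd)
  moreover have "CHAR('a) \<noteq> 0"
    using calculation by (metis dvd_0_left_iff zero_neq_numeral)
  moreover have "CHAR('a) \<noteq> Suc 0"
    by simp
  ultimately show False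
    using assms dvd_imp_le[of "CHAR('a)" 2] by (auto simp: le_Suc_eq numeral_2_eq_2)
qed

lemma one_smult_mat [simp]: "(1::'a::ring_1) \<cdot>\<^sub>m A = A"
  by (intro eq_matI) auto

lemma orthogonality_preserving_parallel:
  fixes F :: "'a::comm_ring_1 vec \<Rightarrow> 'a vec"
  assumes orth: "\<And>v. v \<in> carrier_vec n \<Longrightarrow> u \<bullet> v = 0 \<Longrightarrow> F u \<bullet> v = 0"
    and u: "u \<in> carrier_vec n" and Fu: "F u \<in> carrier_vec n" and ij: "i < n" "j < n"
  shows "F u $ i * u $ j = F u $ j * u $ i"
proof -
  define v where "v = u $ j \<cdot>\<^sub>v unit_vec n i + (- u $ i) \<cdot>\<^sub>v unit_vec n j"
  have v: "v \<in> carrier_vec n"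
    by (simp add: v_def)
  have "w \<bullet> v = u $ j * w $ i - u $ i * w $ j" if "w \<in> carrier_vec n" for w
    using that ij by (simp add: v_def scalar_prod_add_distrib[of w n])
  with orth[OF v] u Fu show ?thesis
    by (simp add: mult.commute)
qed

lemma linear_map_parallel_is_scalar:
  fixes F :: "'a::field vec \<Rightarrow> 'a vec"
  assumes closed: "\<And>u. u \<in> carrier_vec n \<Longrightarrow> F u \<in> carrier_vec n"
    and add: "\<And>u v. u \<in> carrier_vec n \<Longrightarrow> v \<in> carrier_vec n \<Longrightarrow> F (u + v) = F u + F v"
    and smult: "\<And>c u. u \<in> carrier_vec n \<Longrightarrow> F (c \<cdot>\<^sub>v u) = c \<cdot>\<^sub>v F u"
    and parallel: "\<And>u i j. u \<in> carrier_vec n \<Longrightarrow> i < n \<Longrightarrow> j < n \<Longrightarrow> F u $ i * u $ j = F u $ j * u $ i"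
  shows "\<exists>c. \<forall>u \<in> carrier_vec n. F u = c \<cdot>\<^sub>v u"
proof -
  let ?e = "unit_vec n"
  have vanish: "F w $ j = 0" if w: "w \<in> carrier_vec n" and j: "j < n" "w $ j = 0" for w :: "'a vec" and j
  proof (cases "w = 0\<^sub>v n")
    case True
    then have "0 \<cdot>\<^sub>v w = w"
      by (intro eq_vecI) auto
    then have "F w = 0 \<cdot>\<^sub>v F w"
      using smult[OF w, of 0] by simp
    with j closed[OF w] show ?thesis
      by (metis index_smult_vec(1) carrier_vecD mult_zero_left)
  next
    case False
    then obtain i where i: "i < n" "w $ i \<noteq> 0"
      using w by (metis eq_vecI carrier_vecD index_zero_vec)
    with parallel[OF w j(1) i(1)] j(2) show ?thesis
      by simp
  qed
  have diag: "F u $ j = u $ j * F (?e j) $ j" if u: "u \<in> carrier_vec n" and j: "j < n" for u :: "'a vec" and j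
  proof -
    define w where "w = u - u $ j \<cdot>\<^sub>v ?e j"
    have w: "w \<in> carrier_vec n" "w $ j = 0"
      using u j by (auto simp: w_def)
    have "u = u $ j \<cdot>\<^sub>v ?e j + w"
      using u by (auto simp: w_def)
    then have "F u = u $ j \<cdot>\<^sub>v F (?e j) + F w"
      using add smult w by (metis smult_carrier_vec unit_vec_carrier)
    with vanish[OF w(1) j w(2)] j closed[OF w(1)] closed[of "?e j"] show ?thesis
      by simp
  qed
  have diag_const: "F (?e i) $ i = F (?e j) $ j" if ij: "i < n" "j < n" for i j
  proof -
    let ?u = "?e i + ?e j"
    have "F ?u = F (?e i) + F (?e j)"
      by (rule add) simp_all
    moreover have "F (?e j) $ i = 0" "F (?e i) $ j = 0" if "i \<noteq> j"
      using vanish ij that by auto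
    ultimately show ?thesis
      using parallel[of ?u i j] ij closed[of "?e i"] closed[of "?e j"] by (cases "i = j") auto
  qed
  show ?thesis
  proof (intro exI ballI)
    fix u :: "'a vec" assume u: "u \<in> carrier_vec n"
    show "F u = F (?e 0) $ 0 \<cdot>\<^sub>v u"
    proof (rule eq_vecI)
      fix j assume "j < dim_vec (F (?e 0) $ 0 \<cdot>\<^sub>v u)"
      with u have j: "j < n" by simp
      then show "F u $ j = (F (?e 0) $ 0 \<cdot>\<^sub>v u) $ j"
        using diag[OF u j] diag_const[of 0 j] u by simp
    qed (use u closed[OF u] in simp)
  qed
qed

lemma orthogonality_preserving_linear_map_is_scalar:
  fixes F :: "'a::field vec \<Rightarrow> 'a vec"
  assumes closed: "\<And>u. u \<in> carrier_vec n \<Longrightarrow> F u \<in> carrier_vec n"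
    and add: "\<And>u v. u \<in> carrier_vec n \<Longrightarrow> v \<in> carrier_vec n \<Longrightarrow> F (u + v) = F u + F v"
    and smult: "\<And>c u. u \<in> carrier_vec n \<Longrightarrow> F (c \<cdot>\<^sub>v u) = c \<cdot>\<^sub>v F u"
    and orth: "\<And>u v. 2 \<le> n \<Longrightarrow> u \<in> carrier_vec n \<Longrightarrow> v \<in> carrier_vec n \<Longrightarrow>
                 u \<bullet> v = 0 \<Longrightarrow> F u \<bullet> v = 0"
  shows "\<exists>c. \<forall>u \<in> carrier_vec n. F u = c \<cdot>\<^sub>v u"
  \<comment> \<open>In dimension at most 1 every linear map is scalar, so orthogonality is only needed from 2 on.\<close>
proof (rule linear_map_parallel_is_scalar[OF closed add smult])
  fix u :: "'a vec" and i j
  assume u: "u \<in> carrier_vec n" and ij: "i < n" "j < n"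
  show "F u $ i * u $ j = F u $ j * u $ i"
  proof (cases "i = j")
    case False
    with ij have "2 \<le> n" by linarith
    show ?thesis
      by (rule orthogonality_preserving_parallel[of n u F]) (use orth \<open>2 \<le> n\<close> u closed ij in auto)
  qed simp
qed

lemma exists_nonzero_orthogonal_to_two:
  fixes u w :: "'a::field vec"
  assumes u: "u \<in> carrier_vec n" and w: "w \<in> carrier_vec n" and n: "3 \<le> n"
  shows "\<exists>y \<in> carrier_vec n. y \<noteq> 0\<^sub>v n \<and> u \<bullet> y = 0 \<and> w \<bullet> y = 0"
proof -
  define A where "A = mat\<^sub>r n n (\<lambda>i. if i = 2 then 0\<^sub>v n else if i = 0 then u else w)"
  have A: "A \<in> carrier_mat n n"
    by (simp add: A_def)
  have "det A = 0"
    unfolding A_def by (rule det_row_0) (use u w n in auto)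
  then obtain y where y: "y \<in> carrier_vec n" "y \<noteq> 0\<^sub>v n" "A *\<^sub>v y = 0\<^sub>v n"
    using det_0_iff_vec_prod_zero_field[OF A] by blast
  have "row A i \<bullet> y = 0" if "i < n" for i
    using arg_cong[OF y(3), of "\<lambda>v :: 'a vec. v $ i"] that A by simp
  then have "row A 0 \<bullet> y = 0" "row A 1 \<bullet> y = 0"
    using n by auto
  then have "u \<bullet> y = 0" "w \<bullet> y = 0"
    using u w n by (auto simp: A_def)
  with y show ?thesis
    by blast
qed

text \<open>The vector \<open>(x, y, z) \<in> K \<times> K\<^sup>p \<times> K\<close>, split like the blocks of \<open>A_mat\<close> and \<open>B_mat\<close>.\<close>

definition border_vec :: "'a \<Rightarrow> 'a vec \<Rightarrow> 'a \<Rightarrow> 'a vec" where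
  "border_vec x y z =
     vec (dim_vec y + 2) (\<lambda>j. if j = 0 then x else if j = dim_vec y + 1 then z else y $ (j - 1))"

lemma dim_border_vec [simp]: "dim_vec (border_vec x y z) = dim_vec y + 2"
  by (simp add: border_vec_def)

lemma border_vec_eq_zero_iff:
  assumes y: "y \<in> carrier_vec n"
  shows "border_vec x y z = 0\<^sub>v (n + 2) \<longleftrightarrow> x = 0 \<and> y = 0\<^sub>v n \<and> z = 0"
proof
  assume zero: "border_vec x y z = 0\<^sub>v (n + 2)"
  have entry: "border_vec x y z $ j = 0" if "j < n + 2" for j
    using zero that by simp
  have dim: "dim_vec y = n"
    using y by simp
  have "y $ k = 0" if "k < n" for k
    using entry[of "Suc k"] that by (simp add: border_vec_def dim)
  then show "x = 0 \<and> y = 0\<^sub>v n \<and> z = 0"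
    using entry[of 0] entry[of "n + 1"] by (auto simp: border_vec_def dim intro!: eq_vecI)
next
  assume "x = 0 \<and> y = 0\<^sub>v n \<and> z = 0"
  then show "border_vec x y z = 0\<^sub>v (n + 2)"
    by (intro eq_vecI) (auto simp: border_vec_def)
qed

lemma smult_border_vec: "c \<cdot>\<^sub>v border_vec x y z = border_vec (c * x) (c \<cdot>\<^sub>v y) (c * z)"
  by (auto simp: border_vec_def intro: eq_vecI)

lemma sum_split_first_last:
  "(\<Sum>j\<in>{0..<p + 2}. h j) = h 0 + (\<Sum>k\<in>{0..<p}. h (Suc k)) + h (p + 1)"
proof -
  have "(\<Sum>j\<in>{0..<Suc p}. h j) = h 0 + (\<Sum>k\<in>{0..<p}. h (Suc k))"
    by (subst sum.atLeast0_lessThan_Suc_shift) (simp add: comp_def)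
  then show ?thesis
    by (simp add: sum.atLeast0_lessThan_Suc)
qed

lemma A_mat_plus_B_mat_mult_border_vec:
  assumes L: "L \<in> carrier_mat 1 p" and C: "C \<in> carrier_mat p 1"
    and \<phi>L: "\<phi> L \<in> carrier_mat 1 p" and \<psi>C: "\<psi> C \<in> carrier_mat p 1"
    and y: "y \<in> carrier_vec p"
  shows "(A_mat p f \<phi> L + B_mat p g \<psi> C) *\<^sub>v border_vec x y z =
    border_vec (row L 0 \<bullet> y) (x \<cdot>\<^sub>v col (\<psi> C) 0 + z \<cdot>\<^sub>v col C 0) ((f L + g C) * x + row (\<phi> L) 0 \<bullet> y)"
    (is "?M *\<^sub>v ?v = _")
proof (rule eq_vecI)
  fix i assume "i < dim_vec (border_vec (row L 0 \<bullet> y) (x \<cdot>\<^sub>v col (\<psi> C) 0 + z \<cdot>\<^sub>v col C 0)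
      ((f L + g C) * x + row (\<phi> L) 0 \<bullet> y))"
  then have i: "i < p + 2"
    using C by simp
  have M: "?M \<in> carrier_mat (p + 2) (p + 2)"
    by (simp add: A_mat_def B_mat_def)
  have dims: "dim_row ?M = p + 2" "dim_col ?M = p + 2" "dim_vec ?v = p + 2"
    using M y by auto
  have "(?M *\<^sub>v ?v) $ i = (\<Sum>j\<in>{0..<p + 2}. ?M $$ (i, j) * ?v $ j)"
    using i dims by (simp add: scalar_prod_def del: sum.op_ivl_Suc)
  also have "\<dots> = ?M $$ (i, 0) * x + (\<Sum>k\<in>{0..<p}. ?M $$ (i, Suc k) * y $ k) + ?M $$ (i, p + 1) * z"
    by (subst sum_split_first_last)
      (use y in \<open>auto simp: border_vec_def simp del: sum.op_ivl_Suc intro!: sum.cong\<close>)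
  also have "\<dots> = border_vec (row L 0 \<bullet> y) (x \<cdot>\<^sub>v col (\<psi> C) 0 + z \<cdot>\<^sub>v col C 0)
      ((f L + g C) * x + row (\<phi> L) 0 \<bullet> y) $ i"
    using i L C \<phi>L \<psi>C y
    by (auto simp: A_mat_def B_mat_def border_vec_def scalar_prod_def intro!: sum.cong)
  finally show "(?M *\<^sub>v ?v) $ i = \<dots>" .
qed (use C y in \<open>simp add: B_mat_def\<close>)

interpretation to_ac_hom: field_hom "to_ac :: 'a::field \<Rightarrow> 'a alg_closure"
  by unfold_locales auto

lemma ac_eigenvalueI:
  assumes "eigenvalue M c" and "M \<in> carrier_mat n n"
  shows "ac_eigenvalue M (to_ac c)"
  using assms to_ac_hom.eigenvalue_hom unfolding ac_eigenvalue_def by blast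

lemma ac_eigenvalue_of_border_vec:
  assumes L: "L \<in> carrier_mat 1 p" and C: "C \<in> carrier_mat p 1"
    and \<phi>L: "\<phi> L \<in> carrier_mat 1 p" and \<psi>C: "\<psi> C \<in> carrier_mat p 1"
    and y: "y \<in> carrier_vec p" and nonzero: "x \<noteq> 0 \<or> y \<noteq> 0\<^sub>v p \<or> z \<noteq> 0"
    and top: "row L 0 \<bullet> y = c * x"
    and middle: "x \<cdot>\<^sub>v col (\<psi> C) 0 + z \<cdot>\<^sub>v col C 0 = c \<cdot>\<^sub>v y"
    and bottom: "(f L + g C) * x + row (\<phi> L) 0 \<bullet> y = c * z"
  shows "ac_eigenvalue (A_mat p f \<phi> L + B_mat p g \<psi> C) (to_ac c)"
proof (rule ac_eigenvalueI)
  let ?M = "A_mat p f \<phi> L + B_mat p g \<psi> C"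
  show M: "?M \<in> carrier_mat (p + 2) (p + 2)"
    by (simp add: A_mat_def B_mat_def)
  have "?M *\<^sub>v border_vec x y z = border_vec (c * x) (c \<cdot>\<^sub>v y) (c * z)"
    by (simp only: A_mat_plus_B_mat_mult_border_vec[where f = f and g = g and \<phi> = \<phi> and \<psi> = \<psi>, OF L C \<phi>L \<psi>C y] top middle bottom)
  also have "\<dots> = c \<cdot>\<^sub>v border_vec x y z"
    by (rule smult_border_vec[symmetric])
  finally have "?M *\<^sub>v border_vec x y z = c \<cdot>\<^sub>v border_vec x y z" .
  moreover have "border_vec x y z \<noteq> 0\<^sub>v (p + 2)"
    using nonzero unfolding border_vec_eq_zero_iff[OF y] by blast
  moreover have "border_vec x y z \<in> carrier_vec (p + 2)"
    using y by (intro carrier_vecI) simp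
  ultimately have "eigenvector ?M (border_vec x y z) c"
    using M unfolding eigenvector_def carrier_mat_def by simp
  then show "eigenvalue ?M c"
    unfolding eigenvalue_def by blast
qed

lemma mat_of_row_add: "dim_vec u = dim_vec v \<Longrightarrow> mat_of_row (u + v) = mat_of_row u + mat_of_row v"
  by (auto simp: mat_of_row_def intro!: eq_matI)

lemma mat_of_row_smult: "mat_of_row (c \<cdot>\<^sub>v u) = c \<cdot>\<^sub>m mat_of_row u"
  by (auto simp: mat_of_row_def intro!: eq_matI)

lemma mat_of_row_row: "A \<in> carrier_mat 1 n \<Longrightarrow> mat_of_row (row A 0) = A"
  by (auto simp: mat_of_row_def intro!: eq_matI)

lemma mat_of_cols_singleton_add:
  "u \<in> carrier_vec n \<Longrightarrow> v \<in> carrier_vec n \<Longrightarrow>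
    mat_of_cols n [u + v] = mat_of_cols n [u] + mat_of_cols n [v]"
  by (auto simp: mat_of_cols_index intro!: eq_matI)

lemma mat_of_cols_singleton_carrier: "mat_of_cols n [u] \<in> carrier_mat n 1"
  using mat_of_cols_carrier(1)[of n "[u]"] by simp

lemma mat_of_cols_singleton_smult:
  "u \<in> carrier_vec n \<Longrightarrow> mat_of_cols n [c \<cdot>\<^sub>v u] = c \<cdot>\<^sub>m mat_of_cols n [u]"
  by (auto simp: mat_of_cols_index intro!: eq_matI)

lemma mat_of_cols_singleton_col: "A \<in> carrier_mat n 1 \<Longrightarrow> mat_of_cols n [col A 0] = A"
  by (auto simp: mat_of_cols_index intro!: eq_matI)

lemma lin_mat_map_carrier: "lin_mat_map m n k l h \<Longrightarrow> x \<in> carrier_mat m n \<Longrightarrow> h x \<in> carrier_mat k l"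
  unfolding lin_mat_map_def by blast

lemma lin_mat_map_add:
  "lin_mat_map m n k l h \<Longrightarrow> x \<in> carrier_mat m n \<Longrightarrow> y \<in> carrier_mat m n \<Longrightarrow> h (x + y) = h x + h y"
  unfolding lin_mat_map_def by blast

lemma lin_mat_map_smult: "lin_mat_map m n k l h \<Longrightarrow> x \<in> carrier_mat m n \<Longrightarrow> h (a \<cdot>\<^sub>m x) = a \<cdot>\<^sub>m h x"
  unfolding lin_mat_map_def by blast

lemma lin_mat_map_row_scalar:
  fixes \<phi> :: "'a::field mat \<Rightarrow> 'a mat"
  assumes lin: "lin_mat_map 1 n 1 n \<phi>"
    and orth: "\<And>u v. 2 \<le> n \<Longrightarrow> u \<in> carrier_vec n \<Longrightarrow> v \<in> carrier_vec n \<Longrightarrow>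
                 u \<bullet> v = 0 \<Longrightarrow> row (\<phi> (mat_of_row u)) 0 \<bullet> v = 0"
  shows "\<exists>c. \<forall>L \<in> carrier_mat 1 n. \<phi> L = c \<cdot>\<^sub>m L"
proof -
  let ?F = "\<lambda>u. row (\<phi> (mat_of_row u)) 0"
  have closed: "\<phi> (mat_of_row u) \<in> carrier_mat 1 n" if "u \<in> carrier_vec n" for u
    using lin_mat_map_carrier[OF lin] that by simp
  obtain c where c: "\<forall>u \<in> carrier_vec n. ?F u = c \<cdot>\<^sub>v u"
  proof (atomize_elim, rule orthogonality_preserving_linear_map_is_scalar)
    show "?F u \<in> carrier_vec n" if "u \<in> carrier_vec n" for u
      using closed[OF that] by (rule row_carrier_vec[rotated]) simp
    show "?F (u + v) = ?F u + ?F v" if u: "u \<in> carrier_vec n" and v: "v \<in> carrier_vec n" for u v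
      using lin_mat_map_add[OF lin] closed[OF u] closed[OF v] u v by (simp add: mat_of_row_add)
    show "?F (a \<cdot>\<^sub>v u) = a \<cdot>\<^sub>v ?F u" if u: "u \<in> carrier_vec n" for a u
      using lin_mat_map_smult[OF lin] closed[OF u] u by (simp add: mat_of_row_smult carrier_matD)
  qed (rule orth)
  show ?thesis
  proof (intro exI ballI)
    fix L :: "'a mat" assume L: "L \<in> carrier_mat 1 n"
    have "row L 0 \<in> carrier_vec n"
      using L by (rule row_carrier_vec[rotated]) simp
    then have "?F (row L 0) = c \<cdot>\<^sub>v row L 0"
      using c by blast
    moreover have "\<phi> L = mat_of_row (?F (row L 0))"
      using L lin_mat_map_carrier[OF lin L] by (simp add: mat_of_row_row)
    ultimately have "\<phi> L = mat_of_row (c \<cdot>\<^sub>v row L 0)"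
      by simp
    also have "\<dots> = c \<cdot>\<^sub>m L"
      using L by (simp add: mat_of_row_smult mat_of_row_row)
    finally show "\<phi> L = c \<cdot>\<^sub>m L" .
  qed
qed

lemma lin_mat_map_col_scalar:
  fixes \<psi> :: "'a::field mat \<Rightarrow> 'a mat"
  assumes lin: "lin_mat_map n 1 n 1 \<psi>"
    and orth: "\<And>u v. 2 \<le> n \<Longrightarrow> u \<in> carrier_vec n \<Longrightarrow> v \<in> carrier_vec n \<Longrightarrow>
                 u \<bullet> v = 0 \<Longrightarrow> col (\<psi> (mat_of_cols n [u])) 0 \<bullet> v = 0"
  shows "\<exists>c. \<forall>C \<in> carrier_mat n 1. \<psi> C = c \<cdot>\<^sub>m C"
proof -
  let ?F = "\<lambda>u. col (\<psi> (mat_of_cols n [u])) 0"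
  have closed: "\<psi> (mat_of_cols n [u]) \<in> carrier_mat n 1" for u
    using lin_mat_map_carrier[OF lin mat_of_cols_singleton_carrier] .
  obtain c where c: "\<forall>u \<in> carrier_vec n. ?F u = c \<cdot>\<^sub>v u"
  proof (atomize_elim, rule orthogonality_preserving_linear_map_is_scalar)
    show "?F u \<in> carrier_vec n" for u
      using closed by (rule col_carrier_vec[rotated]) simp
    show "?F (u + v) = ?F u + ?F v" if u: "u \<in> carrier_vec n" and v: "v \<in> carrier_vec n" for u v
      using lin_mat_map_add[OF lin mat_of_cols_singleton_carrier mat_of_cols_singleton_carrier] closed u v
      by (simp add: mat_of_cols_singleton_add col_add[OF closed closed])
    show "?F (a \<cdot>\<^sub>v u) = a \<cdot>\<^sub>v ?F u" if u: "u \<in> carrier_vec n" for a u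
      using lin_mat_map_smult[OF lin mat_of_cols_singleton_carrier] closed[of u] u
      by (simp add: mat_of_cols_singleton_smult carrier_matD)
  qed (rule orth)
  show ?thesis
  proof (intro exI ballI)
    fix C :: "'a mat" assume C: "C \<in> carrier_mat n 1"
    have "col C 0 \<in> carrier_vec n"
      using C by (rule col_carrier_vec[rotated]) simp
    then have "?F (col C 0) = c \<cdot>\<^sub>v col C 0"
      using c by blast
    moreover have "\<psi> C = mat_of_cols n [?F (col C 0)]"
      using C lin_mat_map_carrier[OF lin C] by (simp add: mat_of_cols_singleton_col)
    ultimately have "\<psi> C = mat_of_cols n [c \<cdot>\<^sub>v col C 0]"
      by simp
    also have "\<dots> = c \<cdot>\<^sub>m C"
      using C \<open>col C 0 \<in> carrier_vec n\<close> by (simp add: mat_of_cols_singleton_smult mat_of_cols_singleton_col)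
    finally show "\<psi> C = c \<cdot>\<^sub>m C" .
  qed
qed

text \<open>
  Both spectral hypotheses of the theorem are used only through \<open>pm1_free\<close>, i.e. for the
  combination \<open>A\<^sub>L + B\<^sub>C\<close>.
\<close>

locale pm1_free_pencil =
  fixes p :: nat and f g :: "'a::field mat \<Rightarrow> 'a" and \<phi> \<psi> :: "'a mat \<Rightarrow> 'a mat"
  assumes \<phi>_lin: "lin_mat_map 1 p 1 p \<phi>" and \<psi>_lin: "lin_mat_map p 1 p 1 \<psi>"
    and pm1_free: "\<And>L C. L \<in> carrier_mat 1 p \<Longrightarrow> C \<in> carrier_mat p 1 \<Longrightarrow>
        ac_eigenvalue (A_mat p f \<phi> L + B_mat p g \<psi> C) 1 \<Longrightarrow>
        ac_eigenvalue (A_mat p f \<phi> L + B_mat p g \<psi> C) (-1) \<Longrightarrow>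
        (p \<noteq> 2 \<Longrightarrow> ac_eigenvalue (A_mat p f \<phi> L + B_mat p g \<psi> C) 0) \<Longrightarrow> False"
begin

lemma pencil_eigenvalue:
  assumes L: "L \<in> carrier_mat 1 p" and C: "C \<in> carrier_mat p 1"
    and y: "y \<in> carrier_vec p" and nonzero: "x \<noteq> 0 \<or> y \<noteq> 0\<^sub>v p \<or> z \<noteq> 0"
    and "row L 0 \<bullet> y = c * x"
    and "x \<cdot>\<^sub>v col (\<psi> C) 0 + z \<cdot>\<^sub>v col C 0 = c \<cdot>\<^sub>v y"
    and "(f L + g C) * x + row (\<phi> L) 0 \<bullet> y = c * z"
  shows "ac_eigenvalue (A_mat p f \<phi> L + B_mat p g \<psi> C) (to_ac c)"
  using ac_eigenvalue_of_border_vec[where f = f and g = g and \<phi> = \<phi> and \<psi> = \<psi>, OF L C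
      lin_mat_map_carrier[OF \<phi>_lin L] lin_mat_map_carrier[OF \<psi>_lin C] y nonzero] assms(5-)
  by blast

lemma \<phi>_orthogonal:
  assumes p: "2 \<le> p" and u: "u \<in> carrier_vec p" and v: "v \<in> carrier_vec p" and uv: "u \<bullet> v = 0"
  shows "row (\<phi> (mat_of_row u)) 0 \<bullet> v = 0"
proof (rule ccontr)
  define L where "L = mat_of_row u"
  define d where "d = row (\<phi> L) 0 \<bullet> v"
  assume "row (\<phi> (mat_of_row u)) 0 \<bullet> v \<noteq> 0"
  then have d: "d \<noteq> 0"
    by (simp add: d_def L_def)
  define C where "C = mat_of_cols p [(1 / d) \<cdot>\<^sub>v v]"
  have L: "L \<in> carrier_mat 1 p"
    using u by (simp add: L_def)
  have C: "C \<in> carrier_mat p 1"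
    unfolding C_def by (rule mat_of_cols_singleton_carrier)
  have \<phi>L: "\<phi> L \<in> carrier_mat 1 p" and \<psi>C: "\<psi> C \<in> carrier_mat p 1"
    using lin_mat_map_carrier[OF \<phi>_lin L] lin_mat_map_carrier[OF \<psi>_lin C] .
  have rowL: "row L 0 = u" and colC: "col C 0 = (1 / d) \<cdot>\<^sub>v v"
    using v by (simp_all add: L_def C_def)
  have row\<phi>L: "row (\<phi> L) 0 \<in> carrier_vec p"
    using \<phi>L by (rule row_carrier_vec[rotated]) simp
  have col\<psi>C: "col (\<psi> C) 0 \<in> carrier_vec p"
    using \<psi>C by (rule col_carrier_vec[rotated]) simp
  have signs: "ac_eigenvalue (A_mat p f \<phi> L + B_mat p g \<psi> C) (to_ac s)" if s: "s * s = 1" for s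
  proof (rule pencil_eigenvalue[OF L C, where x = 0 and y = "(s / d) \<cdot>\<^sub>v v" and z = 1])
    show "row L 0 \<bullet> ((s / d) \<cdot>\<^sub>v v) = s * 0"
      using u v uv by (simp add: rowL)
    show "0 \<cdot>\<^sub>v col (\<psi> C) 0 + 1 \<cdot>\<^sub>v col C 0 = s \<cdot>\<^sub>v ((s / d) \<cdot>\<^sub>v v)"
      using carrier_vecD[OF col\<psi>C] v s by (auto simp: colC smult_smult_assoc intro!: eq_vecI)
    show "(f L + g C) * 0 + row (\<phi> L) 0 \<bullet> ((s / d) \<cdot>\<^sub>v v) = s * 1"
      using row\<phi>L v d by (simp add: d_def[symmetric])
  qed (use v in auto)
  have zero: "ac_eigenvalue (A_mat p f \<phi> L + B_mat p g \<psi> C) (to_ac 0)" if p2: "p \<noteq> 2"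
  proof -
    obtain y where y: "y \<in> carrier_vec p" "y \<noteq> 0\<^sub>v p" "u \<bullet> y = 0" "row (\<phi> L) 0 \<bullet> y = 0"
      using exists_nonzero_orthogonal_to_two[OF u row\<phi>L] p p2 by auto
    show ?thesis
      by (rule pencil_eigenvalue[OF L C y(1), where x = 0 and z = 0])
        (use y carrier_vecD[OF v] carrier_vecD[OF col\<psi>C] in \<open>auto simp: rowL colC intro!: eq_vecI\<close>)
  qed
  show False
    using pm1_free[OF L C] signs[of 1] signs[of "-1"] zero by simp
qed

lemma \<phi>_scalar: "\<exists>lam. \<forall>L \<in> carrier_mat 1 p. \<phi> L = lam \<cdot>\<^sub>m L"
  using lin_mat_map_row_scalar[OF \<phi>_lin \<phi>_orthogonal] .

lemma \<psi>_orthogonal: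
  assumes p: "2 \<le> p" and u: "u \<in> carrier_vec p" and v: "v \<in> carrier_vec p" and uv: "u \<bullet> v = 0"
  shows "col (\<psi> (mat_of_cols p [u])) 0 \<bullet> v = 0"
proof (rule ccontr)
  obtain lam where lam: "\<forall>L \<in> carrier_mat 1 p. \<phi> L = lam \<cdot>\<^sub>m L"
    using \<phi>_scalar by blast
  define C where "C = mat_of_cols p [u]"
  define d where "d = col (\<psi> C) 0 \<bullet> v"
  assume "col (\<psi> (mat_of_cols p [u])) 0 \<bullet> v \<noteq> 0"
  then have d: "d \<noteq> 0"
    by (simp add: d_def C_def)
  define L where "L = mat_of_row ((1 / d) \<cdot>\<^sub>v v)"
  have L: "L \<in> carrier_mat 1 p"
    using v by (simp add: L_def)
  have C: "C \<in> carrier_mat p 1"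
    unfolding C_def by (rule mat_of_cols_singleton_carrier)
  have rowL: "row L 0 = (1 / d) \<cdot>\<^sub>v v" and colC: "col C 0 = u"
    using u by (simp_all add: L_def C_def)
  have col\<psi>C: "col (\<psi> C) 0 \<in> carrier_vec p"
    using lin_mat_map_carrier[OF \<psi>_lin C] by (rule col_carrier_vec[rotated]) simp
  have row\<phi>L: "row (\<phi> L) 0 \<bullet> y = lam * (row L 0 \<bullet> y)" if "y \<in> carrier_vec p" for y
    using lam L v that by (simp add: rowL)
  have signs: "ac_eigenvalue (A_mat p f \<phi> L + B_mat p g \<psi> C) (to_ac s)" if s: "s * s = 1" for s
  proof -
    \<comment> \<open>eigenvector \<open>(s, y, s \<beta>)\<close>; \<open>\<beta>\<close> is forced by the last row since \<open>row L 0 \<bullet> y = 1\<close>\<close>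
    define \<beta> where "\<beta> = s * (f L + g C) + lam"
    define y where "y = col (\<psi> C) 0 + \<beta> \<cdot>\<^sub>v u"
    have y: "y \<in> carrier_vec p"
      using col\<psi>C u by (simp add: y_def)
    have "v \<bullet> y = d"
      using col\<psi>C u v uv
      by (simp add: y_def d_def add_scalar_prod_distrib[of _ p] comm_scalar_prod[of v p])
    then have top: "row L 0 \<bullet> y = 1"
      using v y d by (simp add: rowL)
    show ?thesis
    proof (rule pencil_eigenvalue[OF L C y, where x = s and z = "s * \<beta>"])
      show "row L 0 \<bullet> y = s * s"
        using top s by simp
      show "s \<cdot>\<^sub>v col (\<psi> C) 0 + (s * \<beta>) \<cdot>\<^sub>v col C 0 = s \<cdot>\<^sub>v y"
        using carrier_vecD[OF col\<psi>C] carrier_vecD[OF u]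
        by (auto simp: colC y_def algebra_simps intro!: eq_vecI)
      have "s * (s * \<beta>) = \<beta>"
        using s by (simp add: mult.assoc[symmetric])
      then show "(f L + g C) * s + row (\<phi> L) 0 \<bullet> y = s * (s * \<beta>)"
        using row\<phi>L[OF y] top by (simp add: \<beta>_def mult.commute)
    qed (use s in auto)
  qed
  have zero: "ac_eigenvalue (A_mat p f \<phi> L + B_mat p g \<psi> C) (to_ac 0)" if p2: "p \<noteq> 2"
  proof -
    obtain y where y: "y \<in> carrier_vec p" "y \<noteq> 0\<^sub>v p" "v \<bullet> y = 0"
      using exists_nonzero_orthogonal_to_two[OF v v] p p2 by auto
    then have top: "row L 0 \<bullet> y = 0"
      using v by (simp add: rowL)
    show ?thesis
      by (rule pencil_eigenvalue[OF L C y(1), where x = 0 and z = 0])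
        (use y top row\<phi>L[OF y(1)] carrier_vecD[OF u] carrier_vecD[OF col\<psi>C] in \<open>auto simp: colC intro!: eq_vecI\<close>)
  qed
  show False
    using pm1_free[OF L C] signs[of 1] signs[of "-1"] zero by simp
qed

lemma \<psi>_scalar: "\<exists>mu. \<forall>C \<in> carrier_mat p 1. \<psi> C = mu \<cdot>\<^sub>m C"
  using lin_mat_map_col_scalar[OF \<psi>_lin \<psi>_orthogonal] .

end

theorem mainTheorem15:
  fixes p :: nat
    and f :: "'a::field mat \<Rightarrow> 'a" and g :: "'a mat \<Rightarrow> 'a"
    and \<phi> :: "'a mat \<Rightarrow> 'a mat" and \<psi> :: "'a mat \<Rightarrow> 'a mat"
  assumes char: "CHAR('a) \<noteq> 2"
    and p: "p \<ge> 1"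
    and f: "lin_mat_form 1 p f"
    and g: "lin_mat_form p 1 g"
    and \<phi>: "lin_mat_map 1 p 1 p \<phi>"
    and \<psi>: "lin_mat_map p 1 p 1 \<psi>"
    and hyp: "(\<forall>L\<in>carrier_mat 1 p. \<forall>C\<in>carrier_mat p 1. \<forall>a b :: 'a.
                 \<forall>k1 k2. ac_eigenvalue (a \<cdot>\<^sub>m A_mat p f \<phi> L + b \<cdot>\<^sub>m B_mat p g \<psi> C) k1 \<and> k1 \<noteq> 0
                     \<and> ac_eigenvalue (a \<cdot>\<^sub>m A_mat p f \<phi> L + b \<cdot>\<^sub>m B_mat p g \<psi> C) k2 \<and> k2 \<noteq> 0
                     \<longrightarrow> k1 = k2)
            \<or> (p \<noteq> 2 \<and>
               (\<forall>L\<in>carrier_mat 1 p. \<forall>C\<in>carrier_mat p 1. \<forall>a b :: 'a.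
                 \<forall>k1 k2 k3. ac_eigenvalue (a \<cdot>\<^sub>m A_mat p f \<phi> L + b \<cdot>\<^sub>m B_mat p g \<psi> C) k1
                     \<and> ac_eigenvalue (a \<cdot>\<^sub>m A_mat p f \<phi> L + b \<cdot>\<^sub>m B_mat p g \<psi> C) k2
                     \<and> ac_eigenvalue (a \<cdot>\<^sub>m A_mat p f \<phi> L + b \<cdot>\<^sub>m B_mat p g \<psi> C) k3
                     \<longrightarrow> k1 = k2 \<or> k1 = k3 \<or> k2 = k3))"
  shows "\<exists>lam mu :: 'a. (\<forall>L\<in>carrier_mat 1 p. \<phi> L = lam \<cdot>\<^sub>m L) \<and> (\<forall>C\<in>carrier_mat p 1. \<psi> C = mu \<cdot>\<^sub>m C)"
proof -
  have pm1: "(1::'a alg_closure) \<noteq> -1"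
    using one_neq_minus_one[OF char] by (metis to_ac_1 to_ac_eq_iff to_ac_minus)
  interpret pm1_free_pencil p f g \<phi> \<psi>
  proof
    fix L C
    assume L: "L \<in> carrier_mat 1 p" and C: "C \<in> carrier_mat p 1"
      and one: "ac_eigenvalue (A_mat p f \<phi> L + B_mat p g \<psi> C) 1"
      and minus_one: "ac_eigenvalue (A_mat p f \<phi> L + B_mat p g \<psi> C) (-1)"
      and zero: "p \<noteq> 2 \<Longrightarrow> ac_eigenvalue (A_mat p f \<phi> L + B_mat p g \<psi> C) 0"
    from hyp show False
    proof (elim disjE conjE, goal_cases)
      case at_most_one_nonzero: 1
      from at_most_one_nonzero[rule_format, OF L C, of 1 1 1 "-1"] show False
        using one minus_one pm1 by simp
    next
      case at_most_two: 2
      from at_most_two(2)[rule_format, OF L C, of 1 1 1 "-1" 0] show False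
        using one minus_one zero[OF at_most_two(1)] pm1 by simp
    qed
  qed (fact \<phi> \<psi>)+
  from \<phi>_scalar \<psi>_scalar show ?thesis
    by blast
qed

end
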